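(* Let $w_0\in\mathbb{N}$ and $w=(w_1,\dots,w_n)$ with each $w_i$ a positive integer at most $2^{n^2}$, let $M=cn$ for a sufficiently large absolute constant $c>0$, let $\lambda=M\|w\|_2$, and define $p_W(x)=\left(\sum_{i=1}^n w_ix_i-w_0\right)^2+\lambda\sum_{i=1}^n x_i(1-x_i)$ and $f_W(x)=\mathrm{sign}(\tfrac12-p_W(x))$. Let $x\in[0,1]^n$ be at $\ell_1$ distance at most $1/(4\|w\|_2)$ from some $z\in\{0,1\}^n$. If $w\cdot z\neq w_0$, then $f_W(x)=-1$.
   Context: $\mathrm{sign}(0)=1$; $\|w\|_2$ is the Euclidean norm. *)

theory Defs
  imports Complex_Main
begin

definition sign0 :: "real \<Rightarrow> int" where
  "sign0 t = (if t \<ge> 0 then 1 else -1)"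

definition wnorm2 :: "nat \<Rightarrow> (nat \<Rightarrow> nat) \<Rightarrow> real" where
  "wnorm2 n w = sqrt (\<Sum>i=1..n. (real (w i))^2)"

definition pW :: "nat \<Rightarrow> (nat \<Rightarrow> nat) \<Rightarrow> nat \<Rightarrow> real \<Rightarrow> (nat \<Rightarrow> real) \<Rightarrow> real" where
  "pW n w w0 lam x = ((\<Sum>i=1..n. real (w i) * x i) - real w0)^2
      + lam * (\<Sum>i=1..n. x i * (1 - x i))"

definition fW :: "nat \<Rightarrow> (nat \<Rightarrow> nat) \<Rightarrow> nat \<Rightarrow> real \<Rightarrow> (nat \<Rightarrow> real) \<Rightarrow> int" where
  "fW n w w0 lam x = sign0 (1/2 - pW n w w0 lam x)"

end

theory Submission
  imports Defs
begin

text \<open>Rounding \<open>x\<close> to the Boolean point \<open>z\<close> moves the linear form \<open>w \<cdot> x\<close> by at most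
  \<open>\<parallel>w\<parallel>\<^sub>\<infinity> \<parallel>x - z\<parallel>\<^sub>1 \<le> \<parallel>w\<parallel>\<^sub>2 \<parallel>x - z\<parallel>\<^sub>1 \<le> 1/4\<close>, while the integer \<open>w \<cdot> z\<close> misses \<open>w\<^sub>0\<close> by at
  least 1. Hence \<open>(w \<cdot> x - w\<^sub>0)\<^sup>2 \<ge> (3/4)\<^sup>2 > 1/2\<close>, and the penalty term is nonnegative on
  \<open>[0,1]\<^sup>n\<close>, so \<open>p\<^sub>W(x) > 1/2\<close>.\<close>

lemma wnorm2_nonneg: "0 \<le> wnorm2 n w"
  unfolding wnorm2_def by (simp add: sum_nonneg)

lemma weight_le_wnorm2:
  assumes "i \<in> {1..n}"
  shows "real (w i) \<le> wnorm2 n w"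
proof -
  have "(real (w i))\<^sup>2 \<le> (\<Sum>j=1..n. (real (w j))\<^sup>2)"
    using assms by (intro member_le_sum) auto
  then have "sqrt ((real (w i))\<^sup>2) \<le> wnorm2 n w"
    unfolding wnorm2_def using real_sqrt_le_mono by blast
  then show ?thesis by simp
qed

lemma weighted_sum_diff_le_wnorm2:
  "\<bar>(\<Sum>i=1..n. real (w i) * x i) - (\<Sum>i=1..n. real (w i) * y i)\<bar>
     \<le> wnorm2 n w * (\<Sum>i=1..n. \<bar>x i - y i\<bar>)"
proof -
  have "\<bar>(\<Sum>i=1..n. real (w i) * x i) - (\<Sum>i=1..n. real (w i) * y i)\<bar>
      = \<bar>\<Sum>i=1..n. real (w i) * (x i - y i)\<bar>"
    by (simp add: sum_subtractf algebra_simps)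
  also have "\<dots> \<le> (\<Sum>i=1..n. real (w i) * \<bar>x i - y i\<bar>)"
    by (rule order_trans[OF sum_abs]) (simp add: abs_mult)
  also have "\<dots> \<le> (\<Sum>i=1..n. wnorm2 n w * \<bar>x i - y i\<bar>)"
    by (intro sum_mono mult_right_mono weight_le_wnorm2) auto
  finally show ?thesis by (simp add: sum_distrib_left)
qed

lemma penalty_nonneg:
  fixes x :: "nat \<Rightarrow> real"
  assumes "0 \<le> lam" and "\<forall>i\<in>{1..n}. 0 \<le> x i \<and> x i \<le> 1"
  shows "0 \<le> lam * (\<Sum>i=1..n. x i * (1 - x i))"
  using assms by (intro mult_nonneg_nonneg sum_nonneg) auto

lemma fW_eq_minus_one_if_far:
  assumes "0 \<le> lam" and "\<forall>i\<in>{1..n}. 0 \<le> x i \<and> x i \<le> 1"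
    and "1/2 < ((\<Sum>i=1..n. real (w i) * x i) - real w0)\<^sup>2"
  shows "fW n w w0 lam x = -1"
proof -
  have "1/2 < pW n w w0 lam x"
    using assms penalty_nonneg[OF assms(1,2)] unfolding pW_def by linarith
  then show ?thesis unfolding fW_def sign0_def by simp
qed

lemma linear_form_far_from_target:
  assumes "(\<Sum>i=1..n. \<bar>x i - real (z i)\<bar>) \<le> 1 / (4 * wnorm2 n w)"
    and "(\<Sum>i=1..n. w i * z i) \<noteq> w0"
  shows "3/4 \<le> \<bar>(\<Sum>i=1..n. real (w i) * x i) - real w0\<bar>"
proof -
  define N where "N = wnorm2 n w"
  have "\<bar>(\<Sum>i=1..n. real (w i) * x i) - (\<Sum>i=1..n. real (w i) * real (z i))\<bar>
      \<le> N * (1 / (4 * N))"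
    using order_trans[OF weighted_sum_diff_le_wnorm2 mult_left_mono[OF assms(1) wnorm2_nonneg]]
    unfolding N_def .
  also have "\<dots> \<le> 1/4" by (cases "N = 0") auto
  finally have close: "\<bar>(\<Sum>i=1..n. real (w i) * x i) - real (\<Sum>i=1..n. w i * z i)\<bar> \<le> 1/4"
    by simp
  have "1 \<le> \<bar>real (\<Sum>i=1..n. w i * z i) - real w0\<bar>"
    using assms(2) by linarith
  with close show ?thesis by linarith
qed

text \<open>Any \<open>c\<^sub>0 > 0\<close> works: the argument only needs \<open>\<lambda> \<ge> 0\<close>.\<close>

theorem claim5p9:
  shows "\<exists>c0>0. \<forall>c\<ge>c0. \<forall>(n::nat) (w::nat \<Rightarrow> nat) (w0::nat) (x::nat \<Rightarrow> real) (z::nat \<Rightarrow> nat).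
    (\<forall>i\<in>{1..n}. 0 < w i \<and> w i \<le> 2 ^ (n^2)) \<longrightarrow>
    (\<forall>i\<in>{1..n}. 0 \<le> x i \<and> x i \<le> 1) \<longrightarrow>
    (\<forall>i\<in>{1..n}. z i \<in> {0, 1}) \<longrightarrow>
    (\<Sum>i=1..n. \<bar>x i - real (z i)\<bar>) \<le> 1 / (4 * wnorm2 n w) \<longrightarrow>
    (\<Sum>i=1..n. w i * z i) \<noteq> w0 \<longrightarrow>
    fW n w w0 ((c * real n) * wnorm2 n w) x = -1"
proof (intro exI[of _ 1] conjI allI impI)
  fix c :: real and n w w0 x z
  assume "1 \<le> c"
    and x_box: "\<forall>i\<in>{1..n}. 0 \<le> x i \<and> x i \<le> 1"
    and near: "(\<Sum>i=1..n. \<bar>x i - real (z i)\<bar>) \<le> 1 / (4 * wnorm2 n w)"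
    and miss: "(\<Sum>i=1..n. w i * z i) \<noteq> w0"
  then have lam: "0 \<le> (c * real n) * wnorm2 n w"
    by (simp add: wnorm2_nonneg)
  have "3/4 \<le> \<bar>(\<Sum>i=1..n. real (w i) * x i) - real w0\<bar>"
    using linear_form_far_from_target[OF near miss] .
  then have "(3/4)\<^sup>2 \<le> ((\<Sum>i=1..n. real (w i) * x i) - real w0)\<^sup>2"
    by (metis abs_le_square_iff abs_of_nonneg zero_le_divide_iff zero_le_numeral)
  then show "fW n w w0 ((c * real n) * wnorm2 n w) x = -1"
    by (intro fW_eq_minus_one_if_far[OF lam x_box]) (simp add: power2_eq_square)
qed simp

end
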